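(* For $\alpha>0$ and $\lambda>0$ let $\psi(\alpha,\lambda)=e^{-\alpha\lambda}\sum_{k=0}^{\infty}\left(\frac{\lambda^k}{k!}\right)^{\alpha}$. Then for every $0<\alpha<1$ the function $\lambda\mapsto\psi(\alpha,\lambda)$ is strictly increasing on $(0,+\infty)$, while for every $\alpha>1$ the function $\lambda\mapsto\psi(\alpha,\lambda)$ is strictly decreasing on $(0,+\infty)$. Consequently, for every $\alpha>0$, $\alpha\ne1$, the R\'enyi entropy $H_R^{\alpha}(\lambda)=\frac{1}{1-\alpha}\log\psi(\alpha,\lambda)$ of the Poisson distribution with parameter $\lambda$ is strictly increasing in $\lambda\in(0,+\infty)$.
   Context: $\psi(\alpha,\lambda)=\sum_{k\ge0}p_k(\lambda)^\alpha$ where $p_k(\lambda)=\frac{\lambda^k}{k!}e^{-\lambda}$ are the Poisson probabilities. The R\'enyi entropy of order $\alpha>0,\alpha\ne1$, of a discrete distribution $(p_i)$ is $\frac{1}{1-\alpha}\log\sum_i p_i^\alpha$. *)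

theory Defs
  imports "HOL-Analysis.Analysis"
begin

definition poisson_p :: "real \<Rightarrow> nat \<Rightarrow> real" where
  "poisson_p l k = l ^ k / fact k * exp (- l)"

definition psi :: "real \<Rightarrow> real \<Rightarrow> real" where
  "psi a l = exp (- a * l) * (\<Sum>k. (l ^ k / fact k) powr a)"

definition renyi_poisson :: "real \<Rightarrow> real \<Rightarrow> real" where
  "renyi_poisson a l = 1 / (1 - a) * ln (\<Sum>k. (poisson_p l k) powr a)"

end

theory Submission
  imports Defs
begin

text \<open>Poisson laws form a convolution semigroup: for \<open>l < m\<close> one has
\<open>p\<^sub>k(m) = \<Sum>\<^sub>j\<^sub>\<le>\<^sub>k r\<^sub>j p\<^sub>k\<^sub>-\<^sub>j(l)\<close> with the probability weights \<open>r = p(m - l)\<close>.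
For \<open>\<alpha> > 1\<close>, Jensen's inequality for the convex map \<open>x \<mapsto> x\<^sup>\<alpha>\<close> and the sub-probability
weights \<open>r\<^sub>0, \<dots>, r\<^sub>k\<close> gives \<open>p\<^sub>k(m)\<^sup>\<alpha> \<le> \<Sum>\<^sub>j\<^sub>\<le>\<^sub>k r\<^sub>j p\<^sub>k\<^sub>-\<^sub>j(l)\<^sup>\<alpha>\<close>. Summing over \<open>k\<close>, the right-hand
side is a Cauchy product whose sum is \<open>(\<Sum>\<^sub>j r\<^sub>j) \<psi>(\<alpha>, l) = \<psi>(\<alpha>, l)\<close>, so \<open>\<psi>(\<alpha>, m) \<le> \<psi>(\<alpha>, l)\<close>;
the inequality is strict already for \<open>k = 0\<close>, where it reads \<open>r\<^sub>0\<^sup>\<alpha> < r\<^sub>0\<close>. For \<open>\<alpha> < 1\<close> every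
inequality reverses by concavity. Since \<open>\<psi>(\<alpha>, \<lambda>) = \<Sum>\<^sub>k p\<^sub>k(\<lambda>)\<^sup>\<alpha>\<close>, the Renyi entropy is
\<open>log \<psi>(\<alpha>, \<lambda>) / (1 - \<alpha>)\<close>, which is increasing in both cases.\<close>

lemma sums_less:
  fixes f g :: "nat \<Rightarrow> real"
  assumes "f sums s" "g sums t" "\<And>n. f n \<le> g n" "f k < g k"
  shows "s < t"
proof -
  have diff: "(\<lambda>n. g n - f n) sums (t - s)"
    by (rule sums_diff[OF assms(2,1)])
  have "0 < (\<Sum>n. g n - f n)"
    by (rule suminf_pos2[OF sums_summable[OF diff], of k]) (use assms(3,4) in auto)
  with diff show ?thesis
    by (simp add: sums_iff)
qed

lemma powr_sum_le_sum_powr_subprob: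
  fixes w x :: "'i \<Rightarrow> real"
  assumes "finite I" "1 \<le> p" "\<And>i. i \<in> I \<Longrightarrow> 0 \<le> w i" "\<And>i. i \<in> I \<Longrightarrow> 0 < x i"
    and "sum w I \<le> 1"
  shows "(\<Sum>i\<in>I. w i * x i) powr p \<le> (\<Sum>i\<in>I. w i * x i powr p)"
proof (cases "sum w I = 0")
  case True
  then have "\<forall>i\<in>I. w i = 0"
    using sum_nonneg_eq_0_iff[OF assms(1)] assms(3) by blast
  then show ?thesis
    by simp
next
  case False
  define W where "W = sum w I"
  have "0 < W"
    using False assms(3) sum_nonneg[of I w] unfolding W_def by fastforce
  then have "I \<noteq> {}"
    unfolding W_def by auto
  \<comment> \<open>Jensen for the normalised weights \<open>w\<^sub>i / W\<close>; the factor \<open>W\<^sup>p\<^sup>-\<^sup>1 \<le> 1\<close> is then dropped.\<close>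
  have "(\<lambda>x. x powr p) (\<Sum>i\<in>I. (w i / W) *\<^sub>R x i) \<le> (\<Sum>i\<in>I. (w i / W) * (\<lambda>x. x powr p) (x i))"
    by (rule convex_on_sum[OF assms(1) \<open>I \<noteq> {}\<close> powr_convex[OF assms(2)]])
      (use assms \<open>0 < W\<close> in \<open>auto simp: W_def sum_divide_distrib[symmetric]\<close>)
  then have "((\<Sum>i\<in>I. w i * x i) / W) powr p \<le> (\<Sum>i\<in>I. w i * x i powr p) / W"
    by (simp add: sum_divide_distrib)
  moreover have "0 \<le> (\<Sum>i\<in>I. w i * x i)"
    using assms by (intro sum_nonneg mult_nonneg_nonneg) (auto intro: less_imp_le)
  ultimately have "(\<Sum>i\<in>I. w i * x i) powr p \<le> W powr p / W * (\<Sum>i\<in>I. w i * x i powr p)"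
    using \<open>0 < W\<close> by (simp add: powr_divide field_simps)
  also have "W powr p / W = W powr (p - 1)"
    using \<open>0 < W\<close> by (simp add: powr_diff)
  also have "W powr (p - 1) * (\<Sum>i\<in>I. w i * x i powr p) \<le> 1 * (\<Sum>i\<in>I. w i * x i powr p)"
    using assms \<open>0 < W\<close> by (intro mult_right_mono powr_le1 sum_nonneg) (auto simp: W_def)
  finally show ?thesis
    by simp
qed

lemma sum_powr_le_powr_sum_subprob:
  fixes w x :: "'i \<Rightarrow> real"
  assumes "finite I" "0 < a" "a \<le> 1" "\<And>i. i \<in> I \<Longrightarrow> 0 \<le> w i" "\<And>i. i \<in> I \<Longrightarrow> 0 < x i"
    and "sum w I \<le> 1"
  shows "(\<Sum>i\<in>I. w i * x i powr a) \<le> (\<Sum>i\<in>I. w i * x i) powr a"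
proof -
  \<comment> \<open>The convex case for the exponent \<open>1 / a\<close> and the points \<open>x\<^sub>i\<^sup>a\<close>.\<close>
  have "(\<Sum>i\<in>I. w i * x i powr a) powr (1 / a) \<le> (\<Sum>i\<in>I. w i * (x i powr a) powr (1 / a))"
    using assms by (intro powr_sum_le_sum_powr_subprob) (auto simp: dual_order.strict_implies_not_eq)
  also have "\<dots> = (\<Sum>i\<in>I. w i * x i)"
  proof (intro sum.cong refl)
    fix i
    assume "i \<in> I"
    with assms(2,5) have "0 < x i" "a \<noteq> 0"
      by auto
    then show "w i * (x i powr a) powr (1 / a) = w i * x i"
      by (simp add: powr_powr)
  qed
  finally have "((\<Sum>i\<in>I. w i * x i powr a) powr (1 / a)) powr a \<le> (\<Sum>i\<in>I. w i * x i) powr a"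
    using assms(2) by (intro powr_mono2) auto
  moreover have "0 \<le> (\<Sum>i\<in>I. w i * x i powr a)"
    using assms by (intro sum_nonneg) auto
  ultimately show ?thesis
    using assms(2) by (simp add: powr_powr)
qed

lemma summable_powr_of_ratio_tendsto_0:
  fixes f c :: "nat \<Rightarrow> real"
  assumes "\<And>n. 0 \<le> f n" "\<And>n. 0 \<le> c n" "\<And>n. f (Suc n) = f n * c n" "c \<longlonglongrightarrow> 0" "0 < a"
  shows "summable (\<lambda>n. f n powr a)"
proof -
  have "(\<lambda>n. c n powr a) \<longlonglongrightarrow> 0"
    using assms(2,4,5) by (intro tendsto_zero_powrI[of c _ "\<lambda>_. a" a]) auto
  then have "eventually (\<lambda>n. c n powr a < 1 / 2) sequentially"
    by (rule order_tendstoD) simp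
  then obtain N where N: "\<And>n. N \<le> n \<Longrightarrow> c n powr a < 1 / 2"
    by (auto simp: eventually_sequentially)
  show ?thesis
  proof (rule summable_ratio_test[of "1 / 2" N])
    fix n
    assume "N \<le> n"
    have "f (Suc n) powr a = f n powr a * c n powr a"
      using assms(1-3) by (simp add: powr_mult)
    also have "\<dots> \<le> f n powr a * (1 / 2)"
      using N[OF \<open>N \<le> n\<close>] by (intro mult_left_mono) auto
    finally show "norm (f (Suc n) powr a) \<le> 1 / 2 * norm (f n powr a)"
      by simp
  qed simp
qed

lemma poisson_p_pos: "0 < l \<Longrightarrow> 0 < poisson_p l k"
  by (simp add: poisson_p_def)

lemma poisson_p_nonneg: "0 \<le> l \<Longrightarrow> 0 \<le> poisson_p l k"
  by (simp add: poisson_p_def)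

lemma poisson_p_0: "poisson_p l 0 = exp (- l)"
  by (simp add: poisson_p_def)

lemma poisson_p_Suc: "poisson_p l (Suc k) = poisson_p l k * (l / Suc k)"
  by (simp add: poisson_p_def field_simps)

lemma poisson_p_sums: "poisson_p l sums 1"
proof -
  have "(\<lambda>k. l ^ k / fact k * exp (- l)) sums (exp l * exp (- l))"
    using exp_converges[of l] by (intro sums_mult2) (simp add: divide_inverse mult_ac)
  then show ?thesis
    by (simp add: poisson_p_def[abs_def] exp_minus)
qed

lemma sum_poisson_p_le_1:
  assumes "0 \<le> l"
  shows "sum (poisson_p l) A \<le> 1"
proof (cases "finite A")
  case True
  then show ?thesis
    using sum_le_suminf[OF sums_summable[OF poisson_p_sums], of A] poisson_p_nonneg[OF assms]
    by (simp add: sums_unique[OF poisson_p_sums, symmetric])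
qed simp

lemma poisson_p_add: "poisson_p (l + m) k = (\<Sum>j\<le>k. poisson_p m j * poisson_p l (k - j))"
proof -
  have "poisson_p (l + m) k = (\<Sum>j\<le>k. of_nat (k choose j) * m ^ j * l ^ (k - j)) / fact k * exp (- (l + m))"
    unfolding poisson_p_def using binomial_ring[of m l k] by (simp add: add.commute)
  also have "\<dots> = (\<Sum>j\<le>k. of_nat (k choose j) * m ^ j * l ^ (k - j) / fact k * exp (- (l + m)))"
    by (simp add: sum_divide_distrib sum_distrib_right)
  also have "\<dots> = (\<Sum>j\<le>k. poisson_p m j * poisson_p l (k - j))"
    by (intro sum.cong) (auto simp: poisson_p_def binomial_fact exp_diff exp_minus field_simps)
  finally show ?thesis .
qed

lemma summable_poisson_p_powr:
  assumes "0 \<le> l" "0 < a"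
  shows "summable (\<lambda>k. poisson_p l k powr a)"
proof (rule summable_powr_of_ratio_tendsto_0[where c = "\<lambda>k. l / real (Suc k)"])
  show "(\<lambda>k. l / real (Suc k)) \<longlonglongrightarrow> 0"
    using LIMSEQ_Suc[OF lim_const_over_n[of l]] by simp
qed (use assms in \<open>auto simp: poisson_p_Suc poisson_p_nonneg\<close>)

lemma poisson_p_powr: "poisson_p l k powr a = exp (- a * l) * (l ^ k / fact k) powr a"
proof -
  have "poisson_p l k powr a = (l ^ k / fact k) powr a * exp (- l) powr a"
    unfolding poisson_p_def by (rule powr_mult)
  then show ?thesis
    by (simp add: exp_powr_real mult_ac)
qed

lemma poisson_p_powr_sums_psi:
  assumes "0 \<le> l" "0 < a"
  shows "(\<lambda>k. poisson_p l k powr a) sums psi a l"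
proof -
  have "summable (\<lambda>k. (l ^ k / fact k) powr a)"
    using summable_poisson_p_powr[OF assms] by (simp add: poisson_p_powr)
  then show ?thesis
    unfolding psi_def poisson_p_powr by (rule sums_mult[OF summable_sums])
qed

lemma psi_pos:
  assumes "0 < l" "0 < a"
  shows "0 < psi a l"
proof -
  have "0 < (\<Sum>k. poisson_p l k powr a)"
    using assms by (intro suminf_pos summable_poisson_p_powr) (auto simp: poisson_p_pos dual_order.strict_implies_not_eq)
  then show ?thesis
    using assms by (simp add: sums_unique[OF poisson_p_powr_sums_psi, symmetric])
qed

lemma renyi_poisson_eq_ln_psi:
  assumes "0 \<le> l" "0 < a"
  shows "renyi_poisson a l = ln (psi a l) / (1 - a)"
  using poisson_p_powr_sums_psi[OF assms] by (simp add: renyi_poisson_def sums_iff)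

lemma poisson_p_mixture:
  "poisson_p m k = (\<Sum>j\<le>k. poisson_p (m - l) j * poisson_p l (k - j))"
  using poisson_p_add[of l "m - l" k] by simp

lemma mixture_poisson_p_powr_sums_psi:
  assumes "0 \<le> l" "l \<le> m" "0 < a"
  shows "(\<lambda>k. \<Sum>j\<le>k. poisson_p (m - l) j * poisson_p l (k - j) powr a) sums psi a l"
proof -
  have "(\<lambda>k. \<Sum>j\<le>k. poisson_p (m - l) j * poisson_p l (k - j) powr a)
      sums ((\<Sum>j. poisson_p (m - l) j) * (\<Sum>k. poisson_p l k powr a))"
    using assms poisson_p_nonneg[of "m - l"] summable_poisson_p_powr[of l a]
      sums_summable[OF poisson_p_sums]
    by (intro Cauchy_product_sums) auto
  then show ?thesis
    using poisson_p_powr_sums_psi[OF assms(1,3)] poisson_p_sums by (simp add: sums_iff)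
qed

lemma psi_strict_antimono:
  assumes "1 < a" "0 < l" "l < m"
  shows "psi a m < psi a l"
proof -
  let ?r = "poisson_p (m - l)"
  have pointwise: "poisson_p m k powr a \<le> (\<Sum>j\<le>k. ?r j * poisson_p l (k - j) powr a)" for k
    unfolding poisson_p_mixture[of m k l] using assms
    by (intro powr_sum_le_sum_powr_subprob sum_poisson_p_le_1) (auto intro: poisson_p_nonneg poisson_p_pos)
  have "?r 0 powr a < ?r 0 powr 1"
    using assms by (intro powr_less_mono') (auto simp: poisson_p_0)
  then have "?r 0 powr a * poisson_p l 0 powr a < ?r 0 * poisson_p l 0 powr a"
    using assms by (intro mult_strict_right_mono) (auto simp: poisson_p_0)
  moreover have "poisson_p m 0 powr a = ?r 0 powr a * poisson_p l 0 powr a"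
    using poisson_p_mixture[of m 0 l] by (simp add: powr_mult)
  ultimately have "poisson_p m 0 powr a < (\<Sum>j\<le>0. ?r j * poisson_p l (0 - j) powr a)"
    by simp
  with pointwise show ?thesis
    by (intro sums_less[OF poisson_p_powr_sums_psi[of m a] mixture_poisson_p_powr_sums_psi[of l m a], where k = 0])
      (use assms in auto)
qed

lemma psi_strict_mono:
  assumes "0 < a" "a < 1" "0 < l" "l < m"
  shows "psi a l < psi a m"
proof -
  let ?r = "poisson_p (m - l)"
  have pointwise: "(\<Sum>j\<le>k. ?r j * poisson_p l (k - j) powr a) \<le> poisson_p m k powr a" for k
    unfolding poisson_p_mixture[of m k l] using assms
    by (intro sum_powr_le_powr_sum_subprob sum_poisson_p_le_1) (auto intro: poisson_p_nonneg poisson_p_pos)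
  have "?r 0 powr 1 < ?r 0 powr a"
    using assms by (intro powr_less_mono') (auto simp: poisson_p_0)
  then have "?r 0 * poisson_p l 0 powr a < ?r 0 powr a * poisson_p l 0 powr a"
    using assms by (intro mult_strict_right_mono) (auto simp: poisson_p_0)
  moreover have "poisson_p m 0 powr a = ?r 0 powr a * poisson_p l 0 powr a"
    using poisson_p_mixture[of m 0 l] by (simp add: powr_mult)
  ultimately have "(\<Sum>j\<le>0. ?r j * poisson_p l (0 - j) powr a) < poisson_p m 0 powr a"
    by simp
  with pointwise show ?thesis
    by (intro sums_less[OF mixture_poisson_p_powr_sums_psi[of l m a] poisson_p_powr_sums_psi[of m a], where k = 0])
      (use assms in auto)
qed

theorem theorem2:
  shows "(\<forall>a::real. 0 < a \<and> a < 1 \<longrightarrow> strict_mono_on {0<..} (psi a))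
       \<and> (\<forall>a::real. 1 < a \<longrightarrow> strict_antimono_on {0<..} (psi a))
       \<and> (\<forall>a::real. 0 < a \<and> a \<noteq> 1 \<longrightarrow> strict_mono_on {0<..} (renyi_poisson a))"
proof (intro conjI allI impI)
  fix a :: real
  assume "0 < a \<and> a < 1"
  then show "strict_mono_on {0<..} (psi a)"
    by (intro monotone_onI) (simp add: psi_strict_mono)
next
  fix a :: real
  assume "1 < a"
  then show "strict_antimono_on {0<..} (psi a)"
    by (intro monotone_onI) (simp add: psi_strict_antimono)
next
  fix a :: real
  assume a: "0 < a \<and> a \<noteq> 1"
  show "strict_mono_on {0<..} (renyi_poisson a)"
  proof (intro monotone_onI)
    fix l m :: real
    assume "l \<in> {0<..}" "m \<in> {0<..}" "l < m"
    then have "0 < l" "l < m" "0 < psi a l" "0 < psi a m"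
      using a by (auto intro: psi_pos)
    then show "renyi_poisson a l < renyi_poisson a m"
      using a psi_strict_mono[of a l m] psi_strict_antimono[of a l m]
      by (cases "a < 1") (auto simp: renyi_poisson_eq_ln_psi divide_strict_right_mono divide_strict_right_mono_neg)
  qed
qed

end
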